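(* Let $p\ge1$, $\mathcal X=\{x\in\mathbb R^d:\|x\|_p\le1\}$, $c\in\mathbb R^d$ and $W=\Lambda=\mathrm{diag}(\lambda_1,\dots,\lambda_d)$ with $\lambda_i>0$; let $\Theta=\{\theta:\|\theta-c\|_W\le1\}$. Let $H(y)=-\sum_{i=1}^dy_i^{1/p}|c_i|-\sqrt{\sum_{i=1}^d\lambda_i^{-1}y_i^{2/p}}$ and consider $P_{C,p}$: minimize $H(y)$ over $y\in\Delta_{d-1}$. Given $y\in\Delta_{d-1}$ define $x_i=y_i^{1/p}\,\mathrm{sign}(c_i)$ and $\theta^\star=c+W^{-1}x/\|x\|_{W^{-1}}$. Then for any $\varepsilon>0$, $y$ is an $\varepsilon$-solution to $P_{C,p}$ if and only if $(x,\theta^\star)$ is an $\varepsilon$-solution to $P_B$.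
   Context: $\|z\|_M=\sqrt{z^\top Mz}$, $\|z\|_p=(\sum_i|z_i|^p)^{1/p}$. $\Delta_{d-1}=\{y\in\mathbb R^d:y_i\ge0,\sum_iy_i=1\}$. Convention $\mathrm{sign}(0)=1$. $P_B$: maximize $x^\top\theta$ over $(x,\theta)\in\mathcal X\times\Theta$; an $\varepsilon$-solution to $P_B$ is $(x,\theta)\in\mathcal X\times\Theta$ with $x^\top\theta\ge\sup_{\mathcal X\times\Theta}x'^\top\theta'-\varepsilon$; an $\varepsilon$-solution to $P_{C,p}$ is $y\in\Delta_{d-1}$ with $H(y)\le\min_{\Delta_{d-1}}H+\varepsilon$. *)

theory Defs
  imports "HOL-Analysis.Analysis"
begin

text \<open>Vectors in R^d are modelled as real^'n for a finite index type 'n (d = CARD('n)).\<close>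

definition Mnorm :: "real^'n^'n \<Rightarrow> real^'n \<Rightarrow> real" where
  "Mnorm M z = sqrt (z \<bullet> (M *v z))"

definition pnorm :: "real \<Rightarrow> real^'n \<Rightarrow> real" where
  "pnorm p z = (\<Sum>i\<in>UNIV. \<bar>z $ i\<bar> powr p) powr (1 / p)"

definition diag_mat :: "(real^'n) \<Rightarrow> real^'n^'n" where
  "diag_mat l = (\<chi> i j. if i = j then l $ i else 0)"

definition std_simplex :: "(real^'n) set" where
  "std_simplex = {y. (\<forall>i. 0 \<le> y $ i) \<and> (\<Sum>i\<in>UNIV. y $ i) = 1}"

text \<open>Sign with the convention sign(0) = 1.\<close>
definition sgn1 :: "real \<Rightarrow> real" where
  "sgn1 t = (if t < 0 then -1 else 1)"

definition Xset :: "real \<Rightarrow> (real^'n) set" where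
  "Xset p = {x. pnorm p x \<le> 1}"

definition Thetaset :: "real^'n^'n \<Rightarrow> real^'n \<Rightarrow> (real^'n) set" where
  "Thetaset W c = {\<theta>. Mnorm W (\<theta> - c) \<le> 1}"

definition Hfun :: "real \<Rightarrow> real^'n \<Rightarrow> real^'n \<Rightarrow> real^'n \<Rightarrow> real" where
  "Hfun p c l y = - (\<Sum>i\<in>UNIV. y $ i powr (1 / p) * \<bar>c $ i\<bar>)
                  - sqrt (\<Sum>i\<in>UNIV. inverse (l $ i) * y $ i powr (2 / p))"

definition eps_sol_PB :: "(real^'n) set \<Rightarrow> (real^'n) set \<Rightarrow> real \<Rightarrow> real^'n \<Rightarrow> real^'n \<Rightarrow> bool" where
  "eps_sol_PB X T \<epsilon> x \<theta> \<longleftrightarrow> x \<in> X \<and> \<theta> \<in> T \<and>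
     x \<bullet> \<theta> \<ge> (SUP xt\<in>X \<times> T. fst xt \<bullet> snd xt) - \<epsilon>"

definition eps_sol_PC :: "(real^'n \<Rightarrow> real) \<Rightarrow> real \<Rightarrow> real^'n \<Rightarrow> bool" where
  "eps_sol_PC H \<epsilon> y \<longleftrightarrow> y \<in> std_simplex \<and> H y \<le> (INF y'\<in>std_simplex. H y') + \<epsilon>"

end

theory Submission
  imports Defs
begin

text \<open>For fixed \<open>x\<close>, weighted Cauchy-Schwarz shows that \<open>x \<bullet> \<theta>\<close> is maximised over the
  ellipsoid \<open>\<parallel>\<theta> - c\<parallel>\<^sub>W \<le> 1\<close> by \<open>\<theta>\<^sup>\<star>\<close>, with value \<open>x \<bullet> c + \<parallel>x\<parallel>\<^bsub>W\<^sup>-\<^sup>1\<^esub>\<close>. This value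
  grows with each \<open>\<bar>x\<^sub>i\<bar>\<close> and is largest when the signs of \<open>x\<close> agree with those of \<open>c\<close>;
  for \<open>x\<^sub>i = y\<^sub>i\<^sup>1\<^sup>/\<^sup>p sign(c\<^sub>i)\<close> it equals \<open>-H(y)\<close>. Every point of the unit \<open>p\<close>-ball is dominated
  in this sense by such a point with \<open>y\<close> on the simplex (pad the masses \<open>\<bar>x\<^sub>i\<bar>\<^sup>p\<close> up to 1).
  Hence \<open>sup P\<^sub>B = - inf P\<^sub>C\<close>, and since \<open>(x, \<theta>\<^sup>\<star>)\<close> has objective value \<open>-H(y)\<close>, the two
  optimality gaps coincide.\<close>

lemma matrix_inv_unique:
  fixes A B :: "'a::semiring_1^'n^'n"
  assumes AB: "A ** B = mat 1" and BA: "B ** A = mat 1"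
  shows "matrix_inv A = B"
proof -
  have "\<exists>A'. A ** A' = mat 1 \<and> A' ** A = mat 1" using AB BA by blast
  then have inv: "A ** matrix_inv A = mat 1 \<and> matrix_inv A ** A = mat 1"
    unfolding matrix_inv_def by (rule someI_ex)
  have "matrix_inv A = matrix_inv A ** (A ** B)" using AB by simp
  also have "\<dots> = (matrix_inv A ** A) ** B" by (simp add: matrix_mul_assoc)
  also have "\<dots> = B" using inv by simp
  finally show ?thesis .
qed

lemma diag_mat_mult_vec: "diag_mat m *v z = (\<chi> i. m $ i * z $ i)"
proof -
  have "(\<Sum>j\<in>UNIV. (if i = j then m $ i else 0) * z $ j)
      = (\<Sum>j\<in>UNIV. if j = i then m $ i * z $ i else 0)" for i
    by (rule sum.cong) auto
  then show ?thesis unfolding matrix_vector_mult_def diag_mat_def by (simp add: vec_eq_iff)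
qed

lemma diag_mat_mult: "diag_mat a ** diag_mat b = diag_mat (\<chi> i. a $ i * b $ i)"
proof -
  have "(\<Sum>k\<in>UNIV. (if i = k then a $ i else 0) * (if k = j then b $ k else 0))
      = (\<Sum>k\<in>UNIV. if k = i then (if i = j then a $ i * b $ i else 0) else 0)" for i j
    by (rule sum.cong) auto
  then show ?thesis unfolding matrix_matrix_mult_def diag_mat_def by (simp add: vec_eq_iff)
qed

lemma diag_mat_ones: "(\<And>i. a $ i = 1) \<Longrightarrow> diag_mat a = mat 1"
  unfolding diag_mat_def mat_def by (simp add: vec_eq_iff)

lemma matrix_inv_diag_mat:
  assumes "\<And>i. l $ i \<noteq> (0::real)"
  shows "matrix_inv (diag_mat l) = diag_mat (\<chi> i. inverse (l $ i))"
  by (rule matrix_inv_unique) (use assms in \<open>auto simp: diag_mat_mult intro!: diag_mat_ones\<close>)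

lemma Mnorm_diag_mat: "Mnorm (diag_mat m) z = sqrt (\<Sum>i\<in>UNIV. m $ i * (z $ i)\<^sup>2)"
  unfolding Mnorm_def diag_mat_mult_vec inner_vec_def by (simp add: power2_eq_square mult_ac)

lemma inner_le_Mnorm_diag_mat:
  assumes l: "\<And>i. l $ i > 0"
  shows "x \<bullet> z \<le> Mnorm (diag_mat (\<chi> i. inverse (l $ i))) x * Mnorm (diag_mat l) z"
proof -
  define u where "u = (\<chi> i. x $ i / sqrt (l $ i))"
  define v where "v = (\<chi> i. sqrt (l $ i) * z $ i)"
  have "u \<bullet> v = x \<bullet> z"
    unfolding inner_vec_def u_def v_def
    by (rule sum.cong) (use l in \<open>auto simp: less_imp_le less_imp_neq[symmetric]\<close>)
  moreover have "norm u = Mnorm (diag_mat (\<chi> i. inverse (l $ i))) x"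
    unfolding u_def norm_vec_def L2_set_def Mnorm_diag_mat
    by (rule arg_cong[where f=sqrt], rule sum.cong)
      (use l in \<open>auto simp: field_simps less_imp_le\<close>)
  moreover have "norm v = Mnorm (diag_mat l) z"
    unfolding v_def norm_vec_def L2_set_def Mnorm_diag_mat
    by (rule arg_cong[where f=sqrt], rule sum.cong)
      (use l in \<open>auto simp: power_mult_distrib less_imp_le\<close>)
  ultimately show ?thesis using norm_cauchy_schwarz by metis
qed

lemma Mnorm_diag_mat_mono:
  assumes "\<And>i. m $ i \<ge> 0" and "\<And>i. \<bar>x $ i\<bar> \<le> \<bar>z $ i\<bar>"
  shows "Mnorm (diag_mat m) x \<le> Mnorm (diag_mat m) z"
  unfolding Mnorm_diag_mat
  by (intro real_sqrt_le_mono sum_mono mult_left_mono) (use assms in \<open>auto simp: abs_le_square_iff\<close>)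

definition ellipsoid_maximizer :: "real^'n^'n \<Rightarrow> real^'n \<Rightarrow> real^'n \<Rightarrow> real^'n" where
  "ellipsoid_maximizer W c x = c + (1 / Mnorm (matrix_inv W) x) *\<^sub>R (matrix_inv W *v x)"

lemma inner_le_on_ellipsoid:
  assumes l: "\<And>i. l $ i > 0" and \<theta>: "\<theta> \<in> Thetaset (diag_mat l) c"
  shows "x \<bullet> \<theta> \<le> x \<bullet> c + Mnorm (matrix_inv (diag_mat l)) x"
proof -
  let ?N = "Mnorm (matrix_inv (diag_mat l)) x"
  have inv: "matrix_inv (diag_mat l) = diag_mat (\<chi> i. inverse (l $ i))"
    using l by (intro matrix_inv_diag_mat) (metis less_irrefl)
  have "x \<bullet> (\<theta> - c) \<le> ?N * Mnorm (diag_mat l) (\<theta> - c)"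
    unfolding inv using l by (rule inner_le_Mnorm_diag_mat)
  also have "\<dots> \<le> ?N"
  proof (rule mult_left_le)
    show "Mnorm (diag_mat l) (\<theta> - c) \<le> 1" using \<theta> by (simp add: Thetaset_def)
    show "?N \<ge> 0"
      unfolding inv Mnorm_diag_mat using l by (simp add: sum_nonneg less_imp_le)
  qed
  finally show ?thesis by (simp add: inner_diff_right)
qed

\<comment> \<open>No \<open>x \<noteq> 0\<close> is needed: for \<open>x = 0\<close> the division by zero gives \<open>\<theta>\<^sup>\<star> = c\<close>.\<close>
lemma
  assumes l: "\<And>i. l $ i > 0"
  shows ellipsoid_maximizer_mem: "ellipsoid_maximizer (diag_mat l) c x \<in> Thetaset (diag_mat l) c"
    and inner_ellipsoid_maximizer:
      "x \<bullet> ellipsoid_maximizer (diag_mat l) c x = x \<bullet> c + Mnorm (matrix_inv (diag_mat l)) x"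
proof -
  define S where "S = (\<Sum>i\<in>UNIV. inverse (l $ i) * (x $ i)\<^sup>2)"
  have S: "S \<ge> 0"
    unfolding S_def using l by (intro sum_nonneg) (simp add: less_imp_le)
  have inv: "matrix_inv (diag_mat l) = diag_mat (\<chi> i. inverse (l $ i))"
    using l by (intro matrix_inv_diag_mat) (metis less_irrefl)
  have N: "Mnorm (matrix_inv (diag_mat l)) x = sqrt S"
    unfolding inv Mnorm_diag_mat S_def by simp
  have \<theta>: "ellipsoid_maximizer (diag_mat l) c x - c = (\<chi> i. inverse (l $ i) * x $ i / sqrt S)"
    unfolding ellipsoid_maximizer_def N unfolding inv diag_mat_mult_vec by (simp add: vec_eq_iff)
  have "(\<Sum>i\<in>UNIV. l $ i * (inverse (l $ i) * x $ i / sqrt S)\<^sup>2) = S / (sqrt S)\<^sup>2"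
    unfolding S_def sum_divide_distrib
    by (rule sum.cong) (use l in \<open>auto simp: power2_eq_square field_simps less_imp_neq[symmetric]\<close>)
  also have "\<dots> \<le> 1" using S by simp
  finally show "ellipsoid_maximizer (diag_mat l) c x \<in> Thetaset (diag_mat l) c"
    unfolding Thetaset_def mem_Collect_eq \<theta> Mnorm_diag_mat by simp
  have "x \<bullet> (ellipsoid_maximizer (diag_mat l) c x - c) = S / sqrt S"
    unfolding \<theta> inner_vec_def S_def sum_divide_distrib
    by (rule sum.cong) (auto simp: power2_eq_square)
  also have "\<dots> = sqrt S" using S by (metis real_div_sqrt)
  finally show "x \<bullet> ellipsoid_maximizer (diag_mat l) c x = x \<bullet> c + Mnorm (matrix_inv (diag_mat l)) x"
    unfolding N by (simp add: inner_diff_right)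
qed

definition signed_root :: "real \<Rightarrow> real^'n \<Rightarrow> real^'n \<Rightarrow> real^'n" where
  "signed_root p c y = (\<chi> i. y $ i powr (1 / p) * sgn1 (c $ i))"

lemma abs_signed_root: "\<bar>signed_root p c y $ i\<bar> = y $ i powr (1 / p)"
  by (simp add: signed_root_def sgn1_def abs_mult)

lemma inner_signed_root: "signed_root p c y \<bullet> c = (\<Sum>i\<in>UNIV. y $ i powr (1 / p) * \<bar>c $ i\<bar>)"
  unfolding signed_root_def inner_vec_def by (rule sum.cong) (auto simp: sgn1_def)

lemma pnorm_signed_root:
  assumes "p \<noteq> 0" and "y \<in> std_simplex"
  shows "pnorm p (signed_root p c y) = 1"
  using assms unfolding pnorm_def abs_signed_root std_simplex_def by (simp add: powr_powr)

lemma neg_Hfun_eq: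
  assumes "\<And>i. l $ i \<noteq> 0"
  shows "- Hfun p c l y
    = signed_root p c y \<bullet> c + Mnorm (matrix_inv (diag_mat l)) (signed_root p c y)"
proof -
  have "(signed_root p c y $ i)\<^sup>2 = y $ i powr (2 / p)" for i
    by (metis abs_signed_root power2_abs powr_add add_divide_distrib one_add_one power2_eq_square)
  then show ?thesis
    unfolding Hfun_def inner_signed_root matrix_inv_diag_mat[OF assms] Mnorm_diag_mat by simp
qed

lemma le_neg_Hfun_if_dominated:
  assumes l: "\<And>i. l $ i > 0" and dom: "\<And>i. \<bar>x $ i\<bar> \<le> y $ i powr (1 / p)"
  shows "x \<bullet> c + Mnorm (matrix_inv (diag_mat l)) x \<le> - Hfun p c l y"
proof -
  have l0: "\<And>i. l $ i \<noteq> 0" using l by (metis less_irrefl)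
  have "x \<bullet> c \<le> (\<Sum>i\<in>UNIV. y $ i powr (1 / p) * \<bar>c $ i\<bar>)"
    unfolding inner_vec_def
  proof (rule sum_mono)
    fix i
    have "x $ i * c $ i \<le> \<bar>x $ i\<bar> * \<bar>c $ i\<bar>" by (simp flip: abs_mult)
    also have "\<dots> \<le> y $ i powr (1 / p) * \<bar>c $ i\<bar>" using dom by (simp add: mult_right_mono)
    finally show "x $ i \<bullet> c $ i \<le> y $ i powr (1 / p) * \<bar>c $ i\<bar>" by simp
  qed
  moreover have "Mnorm (matrix_inv (diag_mat l)) x \<le> Mnorm (matrix_inv (diag_mat l)) (signed_root p c y)"
    unfolding matrix_inv_diag_mat[OF l0]
    by (rule Mnorm_diag_mat_mono) (use l dom in \<open>auto simp: abs_signed_root less_imp_le\<close>)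
  ultimately show ?thesis unfolding neg_Hfun_eq[OF l0] inner_signed_root by linarith
qed

lemma dominated_by_std_simplex:
  fixes x :: "real^'n"
  assumes p: "p > 0" and x: "pnorm p x \<le> 1"
  shows "\<exists>y\<in>std_simplex. \<forall>i. \<bar>x $ i\<bar> \<le> y $ i powr (1 / p)"
proof -
  define S where "S = (\<Sum>i\<in>UNIV. \<bar>x $ i\<bar> powr p)"
  have "S = (S powr (1 / p)) powr p" using p by (simp add: powr_powr S_def sum_nonneg)
  also have "\<dots> \<le> 1"
    using x p by (intro powr_le1) (auto simp: pnorm_def S_def)
  finally have S1: "S \<le> 1" .
  define y where "y = (\<chi> i. \<bar>x $ i\<bar> powr p + (1 - S) / CARD('n))"
  have "y \<in> std_simplex"
    unfolding std_simplex_def y_def using S1 by (auto simp: sum.distrib S_def[symmetric])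
  moreover have "\<bar>x $ i\<bar> \<le> y $ i powr (1 / p)" for i
  proof -
    have "\<bar>x $ i\<bar> = (\<bar>x $ i\<bar> powr p) powr (1 / p)" using p by (simp add: powr_powr)
    also have "\<dots> \<le> y $ i powr (1 / p)" using p S1 by (intro powr_mono2) (auto simp: y_def)
    finally show ?thesis .
  qed
  ultimately show ?thesis by blast
qed

lemma Hfun_bdd_below:
  fixes c l :: "real^'n"
  assumes p: "p > 0" and l: "\<And>i. l $ i > 0"
  shows "bdd_below (Hfun p c l ` std_simplex)"
proof (rule bdd_belowI2)
  fix y :: "real^'n" assume "y \<in> std_simplex"
  then have y0: "\<And>i. y $ i \<ge> 0" and "(\<Sum>i\<in>UNIV. y $ i) = 1" by (auto simp: std_simplex_def)
  then have "\<bar>y $ i\<bar> \<le> 1" for i using member_le_sum[of i UNIV "\<lambda>i. y $ i"] by simp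
  then have le1: "y $ i powr e \<le> 1" if "e \<ge> 0" for i e using that by (simp add: powr_le1)
  have "(\<Sum>i\<in>UNIV. y $ i powr (1 / p) * \<bar>c $ i\<bar>) \<le> (\<Sum>i\<in>UNIV. \<bar>c $ i\<bar>)"
    using p le1 by (intro sum_mono mult_left_le_one_le) simp_all
  moreover have "(\<Sum>i\<in>UNIV. inverse (l $ i) * y $ i powr (2 / p)) \<le> (\<Sum>i\<in>UNIV. inverse (l $ i))"
    using p l le1 by (intro sum_mono mult_right_le_one_le) (simp_all add: less_imp_le)
  ultimately show "- (\<Sum>i\<in>UNIV. \<bar>c $ i\<bar>) - sqrt (\<Sum>i\<in>UNIV. inverse (l $ i)) \<le> Hfun p c l y"
    unfolding Hfun_def by (smt (verit) real_sqrt_le_mono)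
qed

lemma std_simplex_nonempty: "std_simplex \<noteq> {}"
proof -
  have "(\<chi> i. 1 / CARD('n)) \<in> (std_simplex :: (real^'n) set)" by (simp add: std_simplex_def)
  then show ?thesis by blast
qed

lemma SUP_eq_uminus_INF:
  fixes f :: "'a \<Rightarrow> real" and g :: "'b \<Rightarrow> real"
  assumes B: "B \<noteq> {}" and g: "bdd_below (g ` B)"
    and attained: "\<And>b. b \<in> B \<Longrightarrow> \<phi> b \<in> A \<and> f (\<phi> b) = - g b"
    and dominated: "\<And>a. a \<in> A \<Longrightarrow> \<exists>b\<in>B. f a \<le> - g b"
  shows "(SUP a\<in>A. f a) = - (INF b\<in>B. g b)"
proof (rule antisym)
  have g_le: "(INF b\<in>B. g b) \<le> g b" if "b \<in> B" for b using g that by (rule cINF_lower)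
  have "A \<noteq> {}" using B attained by blast
  then show "(SUP a\<in>A. f a) \<le> - (INF b\<in>B. g b)"
  proof (rule cSUP_least)
    fix a assume "a \<in> A"
    then obtain b where "b \<in> B" "f a \<le> - g b" using dominated by blast
    then show "f a \<le> - (INF b\<in>B. g b)" using g_le by force
  qed
  have "bdd_above (f ` A)"
  proof -
    obtain m where "\<And>b. b \<in> B \<Longrightarrow> m \<le> g b" using g by (auto simp: bdd_below_def)
    then have "\<And>a. a \<in> A \<Longrightarrow> f a \<le> - m" using dominated by force
    then show ?thesis by (rule bdd_aboveI2)
  qed
  then have "- (SUP a\<in>A. f a) \<le> (INF b\<in>B. g b)"
    using attained by (intro cINF_greatest[OF B]) (metis cSUP_upper minus_le_iff)
  then show "- (INF b\<in>B. g b) \<le> (SUP a\<in>A. f a)" by linarith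
qed

lemma SUP_inner_eq_uminus_INF_Hfun:
  fixes c l :: "real^'n"
  assumes p: "p > 0" and l: "\<And>i. l $ i > 0"
  shows "(SUP xt\<in>Xset p \<times> Thetaset (diag_mat l) c. fst xt \<bullet> snd xt)
    = - (INF y\<in>std_simplex. Hfun p c l y)"
proof -
  have l0: "\<And>i. l $ i \<noteq> 0" using l by (metis less_irrefl)
  let ?\<phi> = "\<lambda>y. (signed_root p c y, ellipsoid_maximizer (diag_mat l) c (signed_root p c y))"
  have attained: "?\<phi> y \<in> Xset p \<times> Thetaset (diag_mat l) c \<and> fst (?\<phi> y) \<bullet> snd (?\<phi> y) = - Hfun p c l y"
    if "y \<in> std_simplex" for y
    using p l that by (simp add: Xset_def pnorm_signed_root ellipsoid_maximizer_mem
        inner_ellipsoid_maximizer neg_Hfun_eq[OF l0])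
  have dominated: "\<exists>y\<in>std_simplex. fst xt \<bullet> snd xt \<le> - Hfun p c l y"
    if xt_mem: "xt \<in> Xset p \<times> Thetaset (diag_mat l) c" for xt
  proof -
    obtain x \<theta> where xt: "xt = (x, \<theta>)" "pnorm p x \<le> 1" "\<theta> \<in> Thetaset (diag_mat l) c"
      using xt_mem by (auto simp: Xset_def)
    obtain y where y: "y \<in> std_simplex" and dom: "\<forall>i. \<bar>x $ i\<bar> \<le> y $ i powr (1 / p)"
      using dominated_by_std_simplex[OF p xt(2)] by blast
    have "x \<bullet> \<theta> \<le> x \<bullet> c + Mnorm (matrix_inv (diag_mat l)) x"
      using l xt(3) by (rule inner_le_on_ellipsoid)
    also have "\<dots> \<le> - Hfun p c l y"
      using l dom by (intro le_neg_Hfun_if_dominated) auto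
    finally show ?thesis using y xt(1) by auto
  qed
  show ?thesis
    by (rule SUP_eq_uminus_INF[OF std_simplex_nonempty Hfun_bdd_below[OF p l] attained dominated])
qed

theorem theorem4:
  fixes p \<epsilon> :: real and c l y :: "real^'n"
  assumes "p \<ge> 1"
    and "\<forall>i. l $ i > 0"
    and "y \<in> std_simplex"
    and "\<epsilon> > 0"
  defines "W \<equiv> diag_mat l"
  defines "x \<equiv> (\<chi> i. y $ i powr (1 / p) * sgn1 (c $ i))"
  defines "\<theta>s \<equiv> c + (1 / Mnorm (matrix_inv W) x) *\<^sub>R (matrix_inv W *v x)"
  shows "eps_sol_PC (Hfun p c l) \<epsilon> y \<longleftrightarrow> eps_sol_PB (Xset p) (Thetaset W c) \<epsilon> x \<theta>s"
proof -
  have p: "p > 0" and l: "\<And>i. l $ i > 0" and l0: "\<And>i. l $ i \<noteq> 0"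
    using assms(1,2) by (auto simp: less_imp_neq[symmetric])
  have x: "x = signed_root p c y" and \<theta>s: "\<theta>s = ellipsoid_maximizer W c x"
    unfolding x_def \<theta>s_def signed_root_def ellipsoid_maximizer_def by simp_all
  have "x \<in> Xset p" using p assms(3) by (simp add: x Xset_def pnorm_signed_root)
  moreover have "\<theta>s \<in> Thetaset W c" using l by (simp add: \<theta>s W_def ellipsoid_maximizer_mem)
  moreover have "x \<bullet> \<theta>s = - Hfun p c l y"
    using l by (simp add: \<theta>s W_def inner_ellipsoid_maximizer x neg_Hfun_eq[OF l0])
  ultimately show ?thesis
    unfolding eps_sol_PC_def eps_sol_PB_def W_def SUP_inner_eq_uminus_INF_Hfun[OF p l]
    using assms(3) by auto
qed

end
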